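(* Let $M$ be the set of $H\times W$ images in HSV format $x=\{(h,s,v)_{ij}\}^{H\times W}$ with $s_{ij},v_{ij}\in[0,1]$ for which the transformation below is well defined (nonzero denominators). For such $x$ let $s_{\mathrm{mean}},s_{\max},v_{\mathrm{mean}},v_{\max}$ be the means and maximums over pixels of the saturation and brightness values. For $\theta=(\theta_S,\theta_V)$ define \[\mathsf{SV}(x,\theta)=\left\{\left(h,\ \frac{s+(2^{\theta_S}-1)s_{\mathrm{mean}}}{\mathsf{MAX}},\ \frac{v+(2^{\theta_V}-1)v_{\mathrm{mean}}}{\mathsf{MAX}}\right)_{ij}\right\}^{H\times W},\] where $\mathsf{MAX}=\max\big(s_{\max}+(2^{\theta_S}-1)s_{\mathrm{mean}},\ v_{\max}+(2^{\theta_V}-1)v_{\mathrm{mean}}\big)$. Then for all $x\in M$ and $\theta_1,\theta_2\in\mathbb{R}_{\ge0}^2$, $\mathsf{SV}(\mathsf{SV}(x,\theta_1),\theta_2)=\mathsf{SV}(x,\theta_1+\theta_2)$.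
   Context: The hue $h$ is left unchanged by $\mathsf{SV}$; only saturation and brightness values are shifted and renormalized. *)

theory Defs
  imports Main Complex_Main
begin

text \<open>An H x W image in HSV format: pixels indexed by finite types 'h and 'w
  (so H = CARD('h), W = CARD('w), both at least 1); each pixel is a triple (h, s, v).\<close>
type_synonym ('h, 'w) hsv_image = "'h \<Rightarrow> 'w \<Rightarrow> real \<times> real \<times> real"

definition hue :: "real \<times> real \<times> real \<Rightarrow> real" where "hue p = fst p"
definition sat :: "real \<times> real \<times> real \<Rightarrow> real" where "sat p = fst (snd p)"
definition val :: "real \<times> real \<times> real \<Rightarrow> real" where "val p = snd (snd p)"

definition s_mean :: "('h::finite, 'w::finite) hsv_image \<Rightarrow> real" where
  "s_mean x = (\<Sum>i\<in>UNIV. \<Sum>j\<in>UNIV. sat (x i j)) / (real (card (UNIV :: 'h set)) * real (card (UNIV :: 'w set)))"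
definition v_mean :: "('h::finite, 'w::finite) hsv_image \<Rightarrow> real" where
  "v_mean x = (\<Sum>i\<in>UNIV. \<Sum>j\<in>UNIV. val (x i j)) / (real (card (UNIV :: 'h set)) * real (card (UNIV :: 'w set)))"
definition s_max :: "('h::finite, 'w::finite) hsv_image \<Rightarrow> real" where
  "s_max x = Max {sat (x i j) | i j. True}"
definition v_max :: "('h::finite, 'w::finite) hsv_image \<Rightarrow> real" where
  "v_max x = Max {val (x i j) | i j. True}"

definition SV_MAX :: "('h::finite, 'w::finite) hsv_image \<Rightarrow> real \<Rightarrow> real \<Rightarrow> real" where
  "SV_MAX x tS tV = max (s_max x + (2 powr tS - 1) * s_mean x) (v_max x + (2 powr tV - 1) * v_mean x)"

definition SV :: "('h::finite, 'w::finite) hsv_image \<Rightarrow> real \<Rightarrow> real \<Rightarrow> ('h, 'w) hsv_image" where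
  "SV x tS tV = (\<lambda>i j.
     (hue (x i j),
      (sat (x i j) + (2 powr tS - 1) * s_mean x) / SV_MAX x tS tV,
      (val (x i j) + (2 powr tV - 1) * v_mean x) / SV_MAX x tS tV))"

definition M_set :: "('h::finite, 'w::finite) hsv_image set" where
  "M_set = {x. (\<forall>i j. sat (x i j) \<in> {0..1} \<and> val (x i j) \<in> {0..1}) \<and>
              (\<forall>tS tV. tS \<ge> 0 \<longrightarrow> tV \<ge> 0 \<longrightarrow> SV_MAX x tS tV \<noteq> 0)}"

end

theory Submission
  imports Defs
begin

text \<open>Each channel of SV is a positive affine map c \<mapsto> (c + (2^t - 1) * c_mean) / MAX,
  and means and maxima commute with such maps. So after one step the channel mean is
  2^t1 * c_mean / MAX1, and the second shift adds (2^t2 - 1) * 2^t1 * c_mean, which together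
  with the first shift is (2^(t1 + t2) - 1) * c_mean. Hence every numerator of the second step,
  and with them its normaliser, is the one-step quantity for t1 + t2 divided by MAX1, and the
  factors MAX1 cancel.\<close>

definition grid_mean :: "('h::finite \<Rightarrow> 'w::finite \<Rightarrow> real) \<Rightarrow> real" where
  "grid_mean f = (\<Sum>i\<in>UNIV. \<Sum>j\<in>UNIV. f i j) / (real (card (UNIV :: 'h set)) * real (card (UNIV :: 'w set)))"

definition grid_max :: "('h::finite \<Rightarrow> 'w::finite \<Rightarrow> real) \<Rightarrow> real" where
  "grid_max f = Max {f i j | i j. True}"

lemma grid_mean_affine:
  fixes f :: "'h::finite \<Rightarrow> 'w::finite \<Rightarrow> real"
  shows "grid_mean (\<lambda>i j. (f i j + k) / m) = (grid_mean f + k) / m"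
proof -
  have "real (card (UNIV :: 'h set)) * real (card (UNIV :: 'w set)) > 0"
    by (simp add: finite_UNIV_card_ge_0)
  then show ?thesis
    unfolding grid_mean_def
    by (simp add: sum_divide_distrib[symmetric] sum.distrib sum_distrib_left field_simps)
qed

lemma grid_max_mono_commute:
  fixes f :: "'h::finite \<Rightarrow> 'w::finite \<Rightarrow> real"
  assumes "mono g"
  shows "grid_max (\<lambda>i j. g (f i j)) = g (grid_max f)"
proof -
  have range_eq: "{f i j | i j. True} = (\<lambda>(i, j). f i j) ` UNIV" by auto
  have "{g (f i j) | i j. True} = g ` {f i j | i j. True}" by auto
  then show ?thesis
    unfolding grid_max_def range_eq by (simp add: mono_Max_commute[OF assms])
qed

lemma grid_max_affine:
  fixes f :: "'h::finite \<Rightarrow> 'w::finite \<Rightarrow> real"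
  assumes "m > 0"
  shows "grid_max (\<lambda>i j. (f i j + k) / m) = (grid_max f + k) / m"
  using assms by (intro grid_max_mono_commute) (auto simp: mono_def divide_right_mono)

lemma grid_max_ge: "f i j \<le> grid_max f"
proof -
  have "{f i j | i j. True} = (\<lambda>(i, j). f i j) ` UNIV" by auto
  then show ?thesis unfolding grid_max_def by (intro Max_ge) auto
qed

lemma s_mean_eq: "s_mean x = grid_mean (\<lambda>i j. sat (x i j))"
  and v_mean_eq: "v_mean x = grid_mean (\<lambda>i j. val (x i j))"
  and s_max_eq: "s_max x = grid_max (\<lambda>i j. sat (x i j))"
  and v_max_eq: "v_max x = grid_max (\<lambda>i j. val (x i j))"
  by (simp_all add: s_mean_def v_mean_def s_max_def v_max_def grid_mean_def grid_max_def)

lemma hue_SV [simp]: "hue (SV x tS tV i j) = hue (x i j)"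
  and sat_SV [simp]: "sat (SV x tS tV i j) = (sat (x i j) + (2 powr tS - 1) * s_mean x) / SV_MAX x tS tV"
  and val_SV [simp]: "val (SV x tS tV i j) = (val (x i j) + (2 powr tV - 1) * v_mean x) / SV_MAX x tS tV"
  by (simp_all add: SV_def hue_def sat_def val_def)

lemma SV_eqI:
  assumes "\<And>i j. hue (y i j) = hue (z i j)" "\<And>i j. sat (y i j) = sat (z i j)"
    "\<And>i j. val (y i j) = val (z i j)"
  shows "y = z"
  using assms by (intro ext) (simp add: hue_def sat_def val_def prod_eq_iff)

lemma s_mean_SV: "s_mean (SV x tS tV) = 2 powr tS * s_mean x / SV_MAX x tS tV"
  and v_mean_SV: "v_mean (SV x tS tV) = 2 powr tV * v_mean x / SV_MAX x tS tV"
  unfolding s_mean_eq v_mean_eq sat_SV val_SV grid_mean_affine by (simp_all add: algebra_simps)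

lemma s_max_SV:
  "SV_MAX x tS tV > 0 \<Longrightarrow>
    s_max (SV x tS tV) = (s_max x + (2 powr tS - 1) * s_mean x) / SV_MAX x tS tV"
  and v_max_SV:
  "SV_MAX x tS tV > 0 \<Longrightarrow>
    v_max (SV x tS tV) = (v_max x + (2 powr tV - 1) * v_mean x) / SV_MAX x tS tV"
  by (simp_all add: s_max_eq v_max_eq grid_max_affine s_mean_eq[symmetric] v_mean_eq[symmetric])

lemma shift_powr_add:
  fixes c \<mu> m :: real
  shows "(c + (2 powr t1 - 1) * \<mu>) / m + (2 powr t2 - 1) * (2 powr t1 * \<mu> / m)
    = (c + (2 powr (t1 + t2) - 1) * \<mu>) / m"
proof -
  have "(2 powr t2 - 1) * (2 powr t1 * \<mu> / m) = (2 powr t2 - 1) * (2 powr t1 * \<mu>) / m"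
    by simp
  then show ?thesis
    by (simp only: add_divide_distrib[symmetric]) (simp add: powr_add algebra_simps)
qed

lemma SV_MAX_SV:
  assumes pos: "SV_MAX x tS1 tV1 > 0"
  shows "SV_MAX (SV x tS1 tV1) tS2 tV2 = SV_MAX x (tS1 + tS2) (tV1 + tV2) / SV_MAX x tS1 tV1"
proof -
  have "SV_MAX (SV x tS1 tV1) tS2 tV2
      = max ((s_max x + (2 powr (tS1 + tS2) - 1) * s_mean x) / SV_MAX x tS1 tV1)
            ((v_max x + (2 powr (tV1 + tV2) - 1) * v_mean x) / SV_MAX x tS1 tV1)"
    by (simp only: SV_MAX_def [of "SV x tS1 tV1"] s_max_SV[OF pos] v_max_SV[OF pos]
        s_mean_SV v_mean_SV shift_powr_add)
  also have "\<dots> = SV_MAX x (tS1 + tS2) (tV1 + tV2) / SV_MAX x tS1 tV1"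
    using pos by (simp add: SV_MAX_def max_divide_distrib_right)
  finally show ?thesis .
qed

lemma SV_SV:
  assumes pos: "SV_MAX x tS1 tV1 > 0"
  shows "SV (SV x tS1 tV1) tS2 tV2 = SV x (tS1 + tS2) (tV1 + tV2)"
proof (rule SV_eqI)
  have cancel: "(a / SV_MAX x tS1 tV1) / (b / SV_MAX x tS1 tV1) = a / b" for a b
    using pos by simp
  fix i j
  show "hue (SV (SV x tS1 tV1) tS2 tV2 i j) = hue (SV x (tS1 + tS2) (tV1 + tV2) i j)"
    by simp
  show "sat (SV (SV x tS1 tV1) tS2 tV2 i j) = sat (SV x (tS1 + tS2) (tV1 + tV2) i j)"
    by (simp only: sat_SV s_mean_SV SV_MAX_SV[OF pos] shift_powr_add cancel)
  show "val (SV (SV x tS1 tV1) tS2 tV2 i j) = val (SV x (tS1 + tS2) (tV1 + tV2) i j)"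
    by (simp only: val_SV v_mean_SV SV_MAX_SV[OF pos] shift_powr_add cancel)
qed

lemma SV_MAX_pos:
  assumes "x \<in> M_set" "tS \<ge> 0" "tV \<ge> 0"
  shows "SV_MAX x tS tV > 0"
proof -
  have sat_nonneg: "sat (x i j) \<ge> 0" for i j
    using assms(1) by (simp add: M_set_def)
  have "s_max x \<ge> 0"
    unfolding s_max_eq using order_trans[OF sat_nonneg grid_max_ge] .
  moreover have "s_mean x \<ge> 0"
    unfolding s_mean_eq grid_mean_def using sat_nonneg by (simp add: sum_nonneg)
  moreover have "2 powr tS \<ge> 1"
    using assms(2) by (simp add: ge_one_powr_ge_zero)
  ultimately have "SV_MAX x tS tV \<ge> 0"
    unfolding SV_MAX_def by (simp add: le_max_iff_disj)
  moreover have "SV_MAX x tS tV \<noteq> 0"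
    using assms by (simp add: M_set_def)
  ultimately show ?thesis by simp
qed

theorem lemma4:
  fixes x :: "('h::finite, 'w::finite) hsv_image"
    and tS1 tV1 tS2 tV2 :: real
  assumes "x \<in> M_set"
    and "tS1 \<ge> 0" and "tV1 \<ge> 0" and "tS2 \<ge> 0" and "tV2 \<ge> 0"
  shows "SV (SV x tS1 tV1) tS2 tV2 = SV x (tS1 + tS2) (tV1 + tV2)"
  using assms by (intro SV_SV SV_MAX_pos)

end
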